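(* Let $\mathfrak{M}$ be a concrete LIiP-model and $\phi$ a formula. Then $\mathfrak{M},\mathtt{0}\models\phi$ if and only if $\mathfrak{M},s\models\phi$ for every input history $s$.
   Context: Fix a finite set $\mathcal{A}$ of agent names containing a distinguished name $\mathsf{CM}$. Messages: $M ::= a \mid B \mid (M,M)$ ($a\in\mathcal{A}$, $B$ optional data constants, pairs). $\mathcal{P}$ is a denumerable set of propositional variables containing atoms $\mathsf{k}_a(M)$ for all $a$, $M$. Formulas: $\phi ::= P \mid \phi\wedge\phi \mid \phi\vee\phi \mid \neg\phi \mid \phi\to\phi \mid [M]\phi$. Input histories are finite words of input events $\mathrm{in}_a(M)$ ("$a$ receives $M$"); $\mathtt{0}$ is the empty history, $\mathrm{in}_a(M)(s)$ extends $s$ by that event, $\star$ is concatenation. Projection: $\pi_a(\mathtt{0})=\mathtt{0}$, $\pi_a(\mathrm{in}_b(M)(s))=\mathrm{in}_b(M)(\pi_a(s))$ if $a\in\{b,\mathsf{CM}\}$ and $\pi_a(s)$ otherwise. $\mathrm{msgs}(s)$ is the set of messages occurring in $s$; $\mathrm{cl}_a(s)$ is the smallest set of messages containing $a$ and $\mathrm{msgs}(\pi_a(s))$ closed under pairing and taking components of pairs. $s\sqsubseteq_a s'$ iff $\pi_a(s)\star\pi_a(s'')=\pi_a(s')$ for some $s''$; ${\sqsubseteq}:={\sqsubseteq_{\mathsf{CM}}}$; $\equiv_a$ is $\sqsubseteq_a\cap\sqsupseteq_a$. Concrete accessibility: $s\,R^c_M\,s'$ iff there is $\tilde s$ with $s\sqsubseteq\tilde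 s$, $M\in\mathrm{cl}_{\mathsf{CM}}(\tilde s)$, $\tilde s\equiv_{\mathsf{CM}}s'$. A concrete LIiP-model consists of the set of all input histories, the order $\sqsubseteq$, the relations $R^c_M$, and a valuation $\mathcal{V}:\mathcal{P}\to 2^{\text{histories}}$ with $\mathcal{V}(\mathsf{k}_a(M))=\{s: M\in\mathrm{cl}_a(s)\}$ and upward closed along $\sqsubseteq$. Satisfaction: atoms via $\mathcal{V}$; $\wedge,\vee$ classically at $s$; $s\models\neg\phi$ iff no $s'\sqsupseteq s$ satisfies $\phi$; $s\models\phi\to\psi$ iff every $s'\sqsupseteq s$ satisfying $\phi$ satisfies $\psi$; $s\models[M]\phi$ iff every $s'$ with $s\,R^c_M\,s'$ satisfies $\phi$. *)

theory Defs
  imports Main "HOL-Library.Countable"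
begin

text \<open>Agents: a finite type 'a, with the distinguished agent CM passed as a parameter.
  Data constants: an arbitrary type 'd.\<close>

datatype ('a, 'd) msg = Ag 'a | Dat 'd | Pair "('a, 'd) msg" "('a, 'd) msg"

datatype ('a, 'd) event = In 'a "('a, 'd) msg"

type_synonym ('a, 'd) hist = "('a, 'd) event list"

text \<open>The empty history is [], in_a(M)(s) is In a M # s, and concatenation is @.\<close>

fun proj :: "'a \<Rightarrow> 'a \<Rightarrow> ('a, 'd) hist \<Rightarrow> ('a, 'd) hist" where
  "proj CM a [] = []"
| "proj CM a (In b M # s) = (if a = b \<or> a = CM then In b M # proj CM a s else proj CM a s)"

fun msgs :: "('a, 'd) hist \<Rightarrow> ('a, 'd) msg set" where
  "msgs [] = {}"
| "msgs (In b M # s) = insert M (msgs s)"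

inductive_set cl :: "'a \<Rightarrow> 'a \<Rightarrow> ('a, 'd) hist \<Rightarrow> ('a, 'd) msg set"
  for CM :: 'a and a :: 'a and s :: "('a, 'd) hist" where
  cl_self: "Ag a \<in> cl CM a s"
| cl_msgs: "M \<in> msgs (proj CM a s) \<Longrightarrow> M \<in> cl CM a s"
| cl_pair: "M \<in> cl CM a s \<Longrightarrow> N \<in> cl CM a s \<Longrightarrow> Pair M N \<in> cl CM a s"
| cl_fst: "Pair M N \<in> cl CM a s \<Longrightarrow> M \<in> cl CM a s"
| cl_snd: "Pair M N \<in> cl CM a s \<Longrightarrow> N \<in> cl CM a s"

definition hle :: "'a \<Rightarrow> 'a \<Rightarrow> ('a, 'd) hist \<Rightarrow> ('a, 'd) hist \<Rightarrow> bool" where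
  "hle CM a s s' \<longleftrightarrow> (\<exists>s''. proj CM a s @ proj CM a s'' = proj CM a s')"

definition heq :: "'a \<Rightarrow> 'a \<Rightarrow> ('a, 'd) hist \<Rightarrow> ('a, 'd) hist \<Rightarrow> bool" where
  "heq CM a s s' \<longleftrightarrow> hle CM a s s' \<and> hle CM a s' s"

definition Rc :: "'a \<Rightarrow> ('a, 'd) msg \<Rightarrow> ('a, 'd) hist \<Rightarrow> ('a, 'd) hist \<Rightarrow> bool" where
  "Rc CM M s s' \<longleftrightarrow>
     (\<exists>t. hle CM CM s t \<and> M \<in> cl CM CM t \<and> heq CM CM t s')"

datatype ('a, 'd, 'p) pvar = K 'a "('a, 'd) msg" | PV 'p

datatype ('a, 'd, 'p) form =
    Atom "('a, 'd, 'p) pvar"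
  | Conj "('a, 'd, 'p) form" "('a, 'd, 'p) form"
  | Disj "('a, 'd, 'p) form" "('a, 'd, 'p) form"
  | Neg "('a, 'd, 'p) form"
  | Imp "('a, 'd, 'p) form" "('a, 'd, 'p) form"
  | Box "('a, 'd) msg" "('a, 'd, 'p) form"

definition concrete_val ::
  "'a \<Rightarrow> (('a, 'd, 'p) pvar \<Rightarrow> ('a, 'd) hist set) \<Rightarrow> bool" where
  "concrete_val CM V \<longleftrightarrow>
     (\<forall>a M. V (K a M) = {s. M \<in> cl CM a s}) \<and>
     (\<forall>P s s'. s \<in> V P \<longrightarrow> hle CM CM s s' \<longrightarrow> s' \<in> V P)"

primrec sat :: "'a \<Rightarrow> (('a, 'd, 'p) pvar \<Rightarrow> ('a, 'd) hist set) \<Rightarrow> ('a, 'd) hist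
    \<Rightarrow> ('a, 'd, 'p) form \<Rightarrow> bool" where
  "sat CM V s (Atom P) \<longleftrightarrow> s \<in> V P"
| "sat CM V s (Conj \<phi> \<psi>) \<longleftrightarrow> sat CM V s \<phi> \<and> sat CM V s \<psi>"
| "sat CM V s (Disj \<phi> \<psi>) \<longleftrightarrow> sat CM V s \<phi> \<or> sat CM V s \<psi>"
| "sat CM V s (Neg \<phi>) \<longleftrightarrow> (\<forall>s'. hle CM CM s s' \<longrightarrow> \<not> sat CM V s' \<phi>)"
| "sat CM V s (Imp \<phi> \<psi>) \<longleftrightarrow> (\<forall>s'. hle CM CM s s' \<longrightarrow> sat CM V s' \<phi> \<longrightarrow> sat CM V s' \<psi>)"
| "sat CM V s (Box M \<phi>) \<longleftrightarrow> (\<forall>s'. Rc CM M s s' \<longrightarrow> sat CM V s' \<phi>)"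

end

theory Submission
  imports Defs
begin

text \<open>Every clause of the satisfaction relation is hereditary along \<open>\<sqsubseteq>\<close>: atoms by the
  upward closure of the valuation, \<open>\<not>\<close> and \<open>\<rightarrow>\<close> by transitivity of \<open>\<sqsubseteq>\<close>, and \<open>[M]\<close> because
  every \<open>R\<^sup>c\<^sub>M\<close>-successor of a later history is one of an earlier history.
  Since the empty history lies below every history, truth at \<open>0\<close> propagates everywhere.\<close>

lemma proj_append: "proj CM a (s @ t) = proj CM a s @ proj CM a t"
proof (induction s)
  case (Cons e s)
  then show ?case by (cases e) auto
qed simp

lemma hle_Nil: "hle CM a [] s"
  unfolding hle_def by (rule exI[of _ s]) simp

lemma hle_trans:
  assumes "hle CM a s t" and "hle CM a t u"
  shows "hle CM a s u"
proof -
  from assms obtain x y where "proj CM a s @ proj CM a x = proj CM a t"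
    and "proj CM a t @ proj CM a y = proj CM a u"
    unfolding hle_def by blast
  then have "proj CM a s @ proj CM a (x @ y) = proj CM a u"
    by (simp add: proj_append flip: append_assoc)
  then show ?thesis
    unfolding hle_def by blast
qed

lemma Rc_hle_left:
  assumes "hle CM CM s s'" and "Rc CM M s' t"
  shows "Rc CM M s t"
proof -
  from assms(2) obtain u where "hle CM CM s' u" and "M \<in> cl CM CM u" and "heq CM CM u t"
    unfolding Rc_def by blast
  moreover from assms(1) \<open>hle CM CM s' u\<close> have "hle CM CM s u" by (rule hle_trans)
  ultimately show ?thesis
    unfolding Rc_def by blast
qed

lemma sat_hle:
  assumes "concrete_val CM V"
    and "sat CM V s \<phi>" and "hle CM CM s s'"
  shows "sat CM V s' \<phi>"
  using assms(2,3)
proof (induction \<phi> arbitrary: s s')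
  case (Atom P)
  with assms(1) show ?case
    unfolding concrete_val_def sat.simps by blast
next
  case (Neg \<phi>)
  show ?case
    unfolding sat.simps
  proof (intro allI impI)
    fix u
    assume "hle CM CM s' u"
    with Neg.prems(2) have "hle CM CM s u" by (rule hle_trans)
    with Neg.prems(1) show "\<not> sat CM V u \<phi>" by simp
  qed
next
  case (Imp \<phi> \<psi>)
  show ?case
    unfolding sat.simps
  proof (intro allI impI)
    fix u
    assume "hle CM CM s' u" and "sat CM V u \<phi>"
    moreover from Imp.prems(2) \<open>hle CM CM s' u\<close> have "hle CM CM s u" by (rule hle_trans)
    ultimately show "sat CM V u \<psi>" using Imp.prems(1) by simp
  qed
next
  case (Box M \<phi>)
  show ?case
    unfolding sat.simps
  proof (intro allI impI)
    fix u
    assume "Rc CM M s' u"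
    with Box.prems(2) have "Rc CM M s u" by (rule Rc_hle_left)
    with Box.prems(1) show "sat CM V u \<phi>" by simp
  qed
next
  case (Conj \<phi> \<psi>)
  then show ?case by (meson sat.simps(2))
next
  case (Disj \<phi> \<psi>)
  then show ?case by (meson sat.simps(3))
qed

theorem proposition3:
  fixes CM :: "'a::finite"
    and V :: "('a, 'd, 'p::countable) pvar \<Rightarrow> ('a, 'd) hist set"
    and \<phi> :: "('a, 'd, 'p) form"
  assumes "concrete_val CM V"
  shows "sat CM V [] \<phi> \<longleftrightarrow> (\<forall>s. sat CM V s \<phi>)"
proof
  assume "sat CM V [] \<phi>"
  then show "\<forall>s. sat CM V s \<phi>"
    using sat_hle[OF assms _ hle_Nil] by simp
qed simp

end
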